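(* For $r\ge1$ let $A_1^r=\{(\alpha_1,\alpha_2,\alpha_3)\in\mathbb{Z}_{\ge0}^3:\alpha_1\le1,\ \alpha_3=0,\ |\alpha|\le r\}$, $A_2^r=\{(\alpha_1,\alpha_2,\alpha_3):\alpha_1\le1,\ \alpha_2=0,\ \alpha_3\ge1,\ |\alpha|\le r\}$ and $\mathcal F_r=A_1^r\cup A_2^r$. Let $f(x|\theta,v,m)$ be the skew-normal kernel. Then for every $\alpha=(\alpha_1,\alpha_2,\alpha_3)\in\mathbb{Z}_{\ge0}^3$ there are polynomials $P^{\kappa}_{\alpha}(m)$, $H^{\kappa}_{\alpha}(m)$, $Q^{\kappa}_{\alpha}(v)$ (indexed by $\kappa$ in the set below), with $H^\kappa_\alpha(m)\ne0$ for $m\neq0$ and $Q^\kappa_\alpha(v)\ne0$ for $v>0$, such that for all $x,\theta\in\mathbb{R}$, $v>0$ and $m\neq0$, $$\frac{\partial^{|\alpha|}f}{\partial\theta^{\alpha_1}\partial v^{\alpha_2}\partial m^{\alpha_3}}=\sum_{\kappa}\frac{P^{\kappa}_{\alpha}(m)}{H^{\kappa}_{\alpha}(m)Q^{\kappa}_{\alpha}(v)}\frac{\partial^{|\kappa|}f}{\partial\theta^{\kappa_1}\partial v^{\kappa_2}\partial m^{\kappa_3}},$$ where the sum ranges over $\kappa\in\mathcal F_{|\alpha|}$ with $\kappa_1+2\kappa_2+2\kappa_3\le\alpha_1+2\alpha_2+2\alpha_3$.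
   Context: Skew-normal kernel: $f(x|\theta,v,m)=\frac{2}{\sigma}\varphi\!\left(\frac{x-\theta}{\sigma}\right)\Phi\!\left(\frac{m(x-\theta)}{\sigma}\right)$ with $\sigma=\sqrt v$, $\varphi,\Phi$ the standard normal density and cdf. $|\alpha|=\alpha_1+\alpha_2+\alpha_3$. *)

theory Defs
  imports "HOL-Probability.Probability" "HOL-Computational_Algebra.Polynomial"
begin

definition Phi :: "real \<Rightarrow> real" where
  "Phi z = (LBINT t:{..z}. std_normal_density t)"

definition skewnorm :: "real \<Rightarrow> real \<Rightarrow> real \<Rightarrow> real \<Rightarrow> real" where
  "skewnorm x \<theta> v m =
     2 / sqrt v * std_normal_density ((x - \<theta>) / sqrt v) * Phi (m * (x - \<theta>) / sqrt v)"

definition d_theta :: "(real \<Rightarrow> real \<Rightarrow> real \<Rightarrow> real \<Rightarrow> real) \<Rightarrow> real \<Rightarrow> real \<Rightarrow> real \<Rightarrow> real \<Rightarrow> real" where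
  "d_theta g = (\<lambda>x \<theta> v m. deriv (\<lambda>t. g x t v m) \<theta>)"
definition d_v :: "(real \<Rightarrow> real \<Rightarrow> real \<Rightarrow> real \<Rightarrow> real) \<Rightarrow> real \<Rightarrow> real \<Rightarrow> real \<Rightarrow> real \<Rightarrow> real" where
  "d_v g = (\<lambda>x \<theta> v m. deriv (\<lambda>t. g x \<theta> t m) v)"
definition d_m :: "(real \<Rightarrow> real \<Rightarrow> real \<Rightarrow> real \<Rightarrow> real) \<Rightarrow> real \<Rightarrow> real \<Rightarrow> real \<Rightarrow> real \<Rightarrow> real" where
  "d_m g = (\<lambda>x \<theta> v m. deriv (\<lambda>t. g x \<theta> v t) m)"

definition Dskew :: "nat \<times> nat \<times> nat \<Rightarrow> real \<Rightarrow> real \<Rightarrow> real \<Rightarrow> real \<Rightarrow> real" where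
  "Dskew \<alpha> = (case \<alpha> of (a1, a2, a3) \<Rightarrow> (d_theta ^^ a1) ((d_v ^^ a2) ((d_m ^^ a3) skewnorm)))"

definition abs3 :: "nat \<times> nat \<times> nat \<Rightarrow> nat" where
  "abs3 \<alpha> = (case \<alpha> of (a1, a2, a3) \<Rightarrow> a1 + a2 + a3)"

definition A1 :: "nat \<Rightarrow> (nat \<times> nat \<times> nat) set" where
  "A1 r = {(a1, a2, a3). a1 \<le> 1 \<and> a3 = 0 \<and> a1 + a2 + a3 \<le> r}"
definition A2 :: "nat \<Rightarrow> (nat \<times> nat \<times> nat) set" where
  "A2 r = {(a1, a2, a3). a1 \<le> 1 \<and> a2 = 0 \<and> a3 \<ge> 1 \<and> a1 + a2 + a3 \<le> r}"
definition F_set :: "nat \<Rightarrow> (nat \<times> nat \<times> nat) set" where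
  "F_set r = A1 r \<union> A2 r"

definition wt :: "nat \<times> nat \<times> nat \<Rightarrow> nat" where
  "wt \<alpha> = (case \<alpha> of (a1, a2, a3) \<Rightarrow> a1 + 2 * a2 + 2 * a3)"

definition Kset :: "nat \<times> nat \<times> nat \<Rightarrow> (nat \<times> nat \<times> nat) set" where
  "Kset \<alpha> = {\<kappa> \<in> F_set (abs3 \<alpha>). wt \<kappa> \<le> wt \<alpha>}"

end

theory Submission
  imports Defs "HOL-Library.Product_Plus"
begin

text \<open>
  With z = (x - \<theta>) / sqrt v, every parameter derivative of the skew-normal kernel has the form
  v^(-(d+1)/2) (A(z,m) exp(-z^2/2) \<Phi>(mz) + B(z,m) exp(-(1+m^2) z^2/2)) with polynomials A, B, and
  differentiating in \<theta>, v or m acts on the pair (A, B) by explicit linear operators. In this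
  calculus the kernel satisfies
    f_\<theta>\<theta> = 2 f_v - m(1+m^2) f_m   and   2m f_vm = -2m f_m - (1+m^2) f_mm.
  These identities trade every second \<theta>-derivative and every mixed v-m derivative for lower ones,
  at the price of dividing by polynomials in m without nonzero real roots. Induction on the
  multi-index, one derivative at a time, then expresses every derivative through those indexed by
  F; the powers of v in the denominators account for the different homogeneity degrees
  \<kappa>1 + 2\<kappa>2.
\<close>

lemma Phi_split:
  "Phi z = (LBINT t=-\<infinity>..0. std_normal_density t) + (LBINT t=0..ereal z. std_normal_density t)"
proof -
  have "set_integrable lborel UNIV std_normal_density"
    by (simp add: set_integrable_def)
  then have integrable: "interval_lebesgue_integrable lborel a b std_normal_density" for a b
    unfolding interval_lebesgue_integrable_def by (simp add: set_integrable_subset)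
  have "Phi z = (LBINT t:{..<z}. std_normal_density t)"
    unfolding Phi_def by (rule set_integral_discrete_difference[where X="{z}"]) auto
  also have "\<dots> = (LBINT t=-\<infinity>..ereal z. std_normal_density t)"
    by (simp add: interval_lebesgue_integral_def einterval_eq_Iic)
  also have "\<dots> = (LBINT t=-\<infinity>..0. std_normal_density t) + (LBINT t=0..ereal z. std_normal_density t)"
    by (rule interval_integral_sum[symmetric]) (rule integrable)
  finally show ?thesis .
qed

lemma DERIV_Phi: "(Phi has_real_derivative std_normal_density x) (at x)"
proof -
  have cont: "continuous_on A std_normal_density" for A
    unfolding std_normal_density_def by (intro continuous_intros) auto
  have "(at x within {min 0 (x - 1)..max 0 (x + 1)}) = at x"
    by (intro at_within_interior) auto
  then have "((\<lambda>u. LBINT t=0..ereal u. std_normal_density t) has_real_derivative std_normal_density x) (at x)"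
    using interval_integral_FTC2[of "min 0 (x - 1)" 0 "max 0 (x + 1)" std_normal_density x]
    by (auto simp: cont zero_ereal_def has_real_derivative_iff_has_vector_derivative split del: if_split)
  then show ?thesis
    unfolding Phi_split[abs_def] using DERIV_add[OF DERIV_const] by fastforce
qed

lemma DERIV_Phi_comp [derivative_intros]:
  "(f has_real_derivative f') (at x) \<Longrightarrow>
   ((\<lambda>x. Phi (f x)) has_real_derivative std_normal_density (f x) * f') (at x)"
  by (rule DERIV_chain2[OF DERIV_Phi])

section \<open>Polynomials in z with coefficients in m\<close>

type_synonym bipoly = "real poly poly"

definition pderiv_m :: "bipoly \<Rightarrow> bipoly" where
  "pderiv_m A = map_poly pderiv A"

lemma coeff_pderiv_m: "coeff (pderiv_m A) n = pderiv (coeff A n)"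
  unfolding pderiv_m_def by (simp add: coeff_map_poly)

lemma pderiv_m_add [simp]: "pderiv_m (A + B) = pderiv_m A + pderiv_m B"
  by (rule poly_eqI) (simp add: coeff_pderiv_m pderiv_add)

lemma pderiv_m_diff [simp]: "pderiv_m (A - B) = pderiv_m A - pderiv_m B"
  by (rule poly_eqI) (simp add: coeff_pderiv_m pderiv_diff)

lemma pderiv_m_minus [simp]: "pderiv_m (- A) = - pderiv_m A"
  by (rule poly_eqI) (simp add: coeff_pderiv_m pderiv_minus)

lemma pderiv_m_0 [simp]: "pderiv_m 0 = 0"
  by (rule poly_eqI) (simp add: coeff_pderiv_m)

lemma pderiv_m_pCons: "pderiv_m (pCons a A) = pCons (pderiv a) (pderiv_m A)"
  by (rule poly_eqI) (simp add: coeff_pderiv_m coeff_pCons split: nat.split)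

lemma pderiv_m_const [simp]: "pderiv_m [:p:] = [:pderiv p:]"
  by (simp add: pderiv_m_pCons)

lemma pderiv_m_1 [simp]: "pderiv_m 1 = 0"
  by (simp add: one_pCons)

lemma pderiv_m_mult [simp]: "pderiv_m (A * B) = pderiv_m A * B + A * pderiv_m B"
proof (rule poly_eqI)
  have leibniz: "pderiv (p * q) = pderiv p * q + p * pderiv q" for p q :: "real poly"
    by (simp add: pderiv_mult algebra_simps)
  show "coeff (pderiv_m (A * B)) n = coeff (pderiv_m A * B + A * pderiv_m B) n" for n
    by (simp add: coeff_pderiv_m coeff_mult leibniz sum.distrib higher_pderiv_sum[of 1, simplified])
qed

lemma pderiv_m_pderiv: "pderiv_m (pderiv A) = pderiv (pderiv_m A)"
proof (rule poly_eqI)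
  have "pderiv ((1 + of_nat k) * p) = (1 + of_nat k) * pderiv p" for k and p :: "real poly"
    by (simp add: pderiv_mult pderiv_add)
  then show "coeff (pderiv_m (pderiv A)) n = coeff (pderiv (pderiv_m A)) n" for n
    by (simp add: coeff_pderiv_m coeff_pderiv)
qed

definition var_z :: bipoly where "var_z = [:0, 1:]"
definition var_m :: bipoly where "var_m = [:[:0, 1:]:]"
definition const_bp :: "real \<Rightarrow> bipoly" where "const_bp r = [:[:r:]:]"

lemma pderiv_m_var_z [simp]: "pderiv_m var_z = 0"
  by (simp add: var_z_def pderiv_m_pCons)

lemma pderiv_m_var_m [simp]: "pderiv_m var_m = 1"
proof -
  have "pderiv [:0, 1::real:] = 1"
    by (simp add: pderiv_pCons)
  then show ?thesis by (simp add: var_m_def one_pCons)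
qed

lemma pderiv_m_const_bp [simp]: "pderiv_m (const_bp r) = 0"
  by (simp add: const_bp_def)

lemma pderiv_var_z [simp]: "pderiv var_z = 1"
  by (simp add: var_z_def pderiv_pCons one_pCons)

lemma pderiv_var_m [simp]: "pderiv var_m = 0"
  by (simp add: var_m_def pderiv_pCons)

lemma pderiv_const_bp [simp]: "pderiv (const_bp r) = 0"
  by (simp add: const_bp_def pderiv_pCons)

lemma const_bp_of_nat: "const_bp (of_nat n) = of_nat n"
  by (simp add: const_bp_def of_nat_poly)

lemma const_bp_half_times_2: "const_bp (1/2) * 2 = 1"
  by (simp add: const_bp_def numeral_poly one_pCons)

definition bpoly :: "bipoly \<Rightarrow> real \<Rightarrow> real \<Rightarrow> real" where
  "bpoly A z m = poly (poly A [:z:]) m"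

lemma bpoly_add [simp]: "bpoly (A + B) z m = bpoly A z m + bpoly B z m"
  and bpoly_diff [simp]: "bpoly (A - B) z m = bpoly A z m - bpoly B z m"
  and bpoly_mult [simp]: "bpoly (A * B) z m = bpoly A z m * bpoly B z m"
  and bpoly_minus [simp]: "bpoly (- A) z m = - bpoly A z m"
  and bpoly_0 [simp]: "bpoly 0 z m = 0"
  and bpoly_1 [simp]: "bpoly 1 z m = 1"
  and bpoly_pCons: "bpoly (pCons a A) z m = poly a m + z * bpoly A z m"
  and bpoly_const [simp]: "bpoly [:p:] z m = poly p m"
  and bpoly_var_z [simp]: "bpoly var_z z m = z"
  and bpoly_var_m [simp]: "bpoly var_m z m = m"
  and bpoly_const_bp [simp]: "bpoly (const_bp r) z m = r"
  by (simp_all add: bpoly_def var_z_def var_m_def const_bp_def)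

lemma bpoly_power [simp]: "bpoly (A ^ n) z m = bpoly A z m ^ n"
  by (induction n) auto

lemma bpoly_of_nat [simp]: "bpoly (of_nat n) z m = of_nat n"
  by (induction n) auto

lemma DERIV_bpoly_z: "((\<lambda>z. bpoly A z m) has_real_derivative bpoly (pderiv A) z m) (at z)"
proof (induction A arbitrary: z rule: pCons_induct)
  case (pCons a A)
  have "((\<lambda>z. poly a m + z * bpoly A z m) has_real_derivative
      bpoly A z m + z * bpoly (pderiv A) z m) (at z)"
    using pCons.IH by (auto intro!: derivative_eq_intros)
  then show ?case by (simp add: bpoly_pCons pderiv_pCons)
qed simp

lemma DERIV_bpoly_m: "((\<lambda>m. bpoly A z m) has_real_derivative bpoly (pderiv_m A) z m) (at m)"
proof (induction A arbitrary: m rule: pCons_induct)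
  case (pCons a A)
  have "((\<lambda>m. poly a m + z * bpoly A z m) has_real_derivative
      poly (pderiv a) m + z * bpoly (pderiv_m A) z m) (at m)"
    using pCons.IH by (auto intro!: derivative_eq_intros poly_DERIV)
  then show ?case by (simp add: bpoly_pCons pderiv_m_pCons)
qed (simp add: bpoly_def [abs_def] poly_0 [abs_def])

lemma DERIV_bpoly_z_comp [derivative_intros]:
  "(f has_real_derivative f') (at x) \<Longrightarrow>
   ((\<lambda>x. bpoly A (f x) m) has_real_derivative bpoly (pderiv A) (f x) m * f') (at x)"
  by (rule DERIV_chain2[OF DERIV_bpoly_z])

lemma DERIV_bpoly_m_comp [derivative_intros]:
  "(f has_real_derivative f') (at x) \<Longrightarrow>
   ((\<lambda>x. bpoly A z (f x)) has_real_derivative bpoly (pderiv_m A) z (f x) * f') (at x)"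
  by (rule DERIV_chain2[OF DERIV_bpoly_m])

section \<open>Gaussian forms\<close>

type_synonym form = "bipoly \<times> bipoly"

definition c_phi :: real where "c_phi = 1 / sqrt (2 * pi)"

definition form_val :: "form \<Rightarrow> real \<Rightarrow> real \<Rightarrow> real" where
  "form_val X z m = bpoly (fst X) z m * exp (- z\<^sup>2 / 2) * Phi (m * z)
     + bpoly (snd X) z m * exp (- (1 + m\<^sup>2) * z\<^sup>2 / 2)"

definition scale_form :: "bipoly \<Rightarrow> form \<Rightarrow> form" where
  "scale_form K X = (K * fst X, K * snd X)"

definition Lz :: "form \<Rightarrow> form" where
  "Lz X = (pderiv (fst X) - var_z * fst X,
           pderiv (snd X) - (1 + var_m\<^sup>2) * var_z * snd X + const_bp c_phi * var_m * fst X)"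

definition Lm :: "form \<Rightarrow> form" where
  "Lm X = (pderiv_m (fst X),
           pderiv_m (snd X) + const_bp c_phi * var_z * fst X - var_m * var_z\<^sup>2 * snd X)"

definition Ltheta :: "form \<Rightarrow> form" where
  "Ltheta X = - Lz X"

text \<open>If X encodes the form W, then Lv d X encodes v^((d+3)/2) \<partial>/\<partial>v (v^(-(d+1)/2) W);
  the z/2 term comes from dz/dv = -z/(2v).\<close>

definition Lv :: "nat \<Rightarrow> form \<Rightarrow> form" where
  "Lv d X = scale_form (- (of_nat d + 1) * const_bp (1/2)) X - scale_form (const_bp (1/2) * var_z) (Lz X)"

lemmas pderiv_simps = pderiv_add pderiv_diff pderiv_minus pderiv_mult pderiv_m_pderiv power2_eq_square

lemma Lm_Ltheta_commute: "Lm (Ltheta X) = Ltheta (Lm X)"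
  by (induction X) (simp add: Lm_def Ltheta_def Lz_def pderiv_simps, algebra)

lemma Lm_Lv_commute: "Lm (Lv d X) = Lv d (Lm X)"
  by (induction X) (simp add: Lm_def Lv_def scale_form_def Lz_def pderiv_simps const_bp_of_nat[symmetric], algebra)

lemma Ltheta_Lv_commute: "Ltheta (Lv d X) = Lv (Suc d) (Ltheta X)"
  by (induction X) (simp add: Ltheta_def Lv_def scale_form_def Lz_def pderiv_simps, algebra)

lemma scale_form_add: "scale_form K (X + Y) = scale_form K X + scale_form K Y"
  by (simp add: scale_form_def algebra_simps)

lemma scale_form_diff: "scale_form K (X - Y) = scale_form K X - scale_form K Y"
  by (simp add: scale_form_def algebra_simps)

lemma scale_form_zero [simp]: "scale_form K 0 = 0"
  by (simp add: scale_form_def zero_prod_def)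

lemma scale_form_left_0 [simp]: "scale_form 0 X = 0"
  by (simp add: scale_form_def zero_prod_def)

lemma scale_form_left_1 [simp]: "scale_form 1 X = X"
  by (simp add: scale_form_def)

lemma scale_form_left_add: "scale_form (K + L) X = scale_form K X + scale_form L X"
  by (simp add: scale_form_def algebra_simps)

lemma scale_form_scale_form: "scale_form K (scale_form L X) = scale_form (K * L) X"
  by (simp add: scale_form_def algebra_simps)

lemma scale_form_sum: "scale_form K (sum f S) = (\<Sum>i\<in>S. scale_form K (f i))"
  using sum_comp_morphism[of "scale_form K" f S] by (simp add: scale_form_add o_def)

lemma Lz_add: "Lz (X + Y) = Lz X + Lz Y"
  by (simp add: Lz_def pderiv_add algebra_simps)

lemma Lz_zero [simp]: "Lz 0 = 0"
  by (simp add: Lz_def zero_prod_def)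

lemma Lz_scale_form: "pderiv K = 0 \<Longrightarrow> Lz (scale_form K X) = scale_form K (Lz X)"
  by (simp add: Lz_def scale_form_def pderiv_mult algebra_simps)

lemma Ltheta_add: "Ltheta (X + Y) = Ltheta X + Ltheta Y"
  by (simp add: Ltheta_def Lz_add)

lemma Ltheta_zero [simp]: "Ltheta 0 = 0"
  by (simp add: Ltheta_def)

lemma Ltheta_scale_form: "pderiv K = 0 \<Longrightarrow> Ltheta (scale_form K X) = scale_form K (Ltheta X)"
  using Lz_scale_form[of K X] by (simp add: Ltheta_def scale_form_def)

lemma Lv_add: "Lv d (X + Y) = Lv d X + Lv d Y"
  by (simp add: Lv_def Lz_add scale_form_add)

lemma Lv_zero [simp]: "Lv d 0 = 0"
  by (simp add: Lv_def)

lemma Lv_scale_form: "pderiv K = 0 \<Longrightarrow> Lv d (scale_form K X) = scale_form K (Lv d X)"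
  by (simp add: Lv_def Lz_scale_form scale_form_scale_form scale_form_diff mult.commute)

lemma Lv_shift: "Lv (d + e) X = Lv d X + scale_form (const_bp (- real e / 2)) X"
proof -
  have "Lv (d + e) X = Lv d X + scale_form (- of_nat e * const_bp (1/2)) X"
    by (simp add: Lv_def scale_form_def algebra_simps)
  moreover have "- of_nat e * const_bp (1/2) = const_bp (- real e / 2)"
    by (simp add: const_bp_def of_nat_poly)
  ultimately show ?thesis by simp
qed

lemma Lm_add: "Lm (X + Y) = Lm X + Lm Y"
  by (simp add: Lm_def algebra_simps)

lemma Lm_diff: "Lm (X - Y) = Lm X - Lm Y"
  by (simp add: Lm_def algebra_simps)

lemma Lm_zero [simp]: "Lm 0 = 0"
  by (simp add: Lm_def zero_prod_def)

lemma Lm_scale_form: "Lm (scale_form K X) = scale_form (pderiv_m K) X + scale_form K (Lm X)"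
  by (simp add: Lm_def scale_form_def algebra_simps)

lemma Lm_scale_form_const: "Lm (scale_form [:p:] X) = scale_form [:pderiv p:] X + scale_form [:p:] (Lm X)"
  by (simp add: Lm_scale_form)

lemma Lm_sum: "Lm (sum f S) = (\<Sum>i\<in>S. Lm (f i))"
  using sum_comp_morphism[of Lm f S] by (simp add: Lm_add o_def)

lemma form_val_add [simp]: "form_val (X + Y) z m = form_val X z m + form_val Y z m"
  and form_val_diff [simp]: "form_val (X - Y) z m = form_val X z m - form_val Y z m"
  and form_val_minus [simp]: "form_val (- X) z m = - form_val X z m"
  and form_val_zero [simp]: "form_val 0 z m = 0"
  and form_val_scale_form [simp]: "form_val (scale_form K X) z m = bpoly K z m * form_val X z m"
  by (simp_all add: form_val_def scale_form_def algebra_simps)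

lemma form_val_sum: "form_val (sum f S) z m = (\<Sum>i\<in>S. form_val (f i) z m)"
  using sum_comp_morphism[of "\<lambda>X. form_val X z m" f S] by (simp add: o_def)

lemma form_val_Lv:
  "form_val (Lv d X) z m = - (real d + 1) / 2 * form_val X z m - z / 2 * form_val (Lz X) z m"
  by (simp add: Lv_def)

lemma exp_times_std_normal_density:
  "exp (- z\<^sup>2 / 2) * std_normal_density (m * z) = c_phi * exp (- (1 + m\<^sup>2) * z\<^sup>2 / 2)"
proof -
  have "exp (- z\<^sup>2 / 2) * exp (- (m * z)\<^sup>2 / 2) = exp (- (1 + m\<^sup>2) * z\<^sup>2 / 2)"
    by (simp add: exp_add[symmetric] algebra_simps power_mult_distrib)
  then show ?thesis by (simp add: std_normal_density_def c_phi_def algebra_simps)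
qed

lemma DERIV_form_val_z: "((\<lambda>z. form_val X z m) has_real_derivative form_val (Lz X) z m) (at z)"
proof -
  have "((\<lambda>z. form_val X z m) has_real_derivative
      (bpoly (pderiv (fst X)) z m - z * bpoly (fst X) z m) * exp (- z\<^sup>2 / 2) * Phi (m * z)
      + m * bpoly (fst X) z m * (exp (- z\<^sup>2 / 2) * std_normal_density (m * z))
      + (bpoly (pderiv (snd X)) z m - (1 + m\<^sup>2) * z * bpoly (snd X) z m)
        * exp (- (1 + m\<^sup>2) * z\<^sup>2 / 2)) (at z)"
    unfolding form_val_def by (auto intro!: derivative_eq_intros simp: field_simps)
  then show ?thesis
    unfolding exp_times_std_normal_density by (simp add: form_val_def Lz_def algebra_simps)
qed

lemma DERIV_form_val_m: "((\<lambda>m. form_val X z m) has_real_derivative form_val (Lm X) z m) (at m)"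
proof -
  have "((\<lambda>m. form_val X z m) has_real_derivative
      bpoly (pderiv_m (fst X)) z m * exp (- z\<^sup>2 / 2) * Phi (m * z)
      + z * bpoly (fst X) z m * (exp (- z\<^sup>2 / 2) * std_normal_density (m * z))
      + (bpoly (pderiv_m (snd X)) z m - m * z\<^sup>2 * bpoly (snd X) z m)
        * exp (- (1 + m\<^sup>2) * z\<^sup>2 / 2)) (at m)"
    unfolding form_val_def by (auto intro!: derivative_eq_intros simp: algebra_simps)
  then show ?thesis
    unfolding exp_times_std_normal_density by (simp add: form_val_def Lm_def algebra_simps)
qed

lemma DERIV_form_val_z_comp [derivative_intros]:
  "(f has_real_derivative f') (at x) \<Longrightarrow>
   ((\<lambda>x. form_val X (f x) m) has_real_derivative form_val (Lz X) (f x) m * f') (at x)"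
  by (rule DERIV_chain2[OF DERIV_form_val_z])

section \<open>Parameter derivatives of the kernel\<close>

definition param_val :: "nat \<Rightarrow> form \<Rightarrow> real \<Rightarrow> real \<Rightarrow> real \<Rightarrow> real \<Rightarrow> real" where
  "param_val d X x \<theta> v m = form_val X ((x - \<theta>) / sqrt v) m / sqrt v ^ Suc d"

lemma DERIV_param_val_theta:
  assumes "0 < v"
  shows "((\<lambda>t. param_val d X x t v m) has_real_derivative param_val (Suc d) (Ltheta X) x \<theta> v m) (at \<theta>)"
  unfolding param_val_def Ltheta_def using assms
  by (auto intro!: derivative_eq_intros simp: field_simps)

lemma DERIV_param_val_m:
  "((\<lambda>t. param_val d X x \<theta> v t) has_real_derivative param_val d (Lm X) x \<theta> v m) (at m)"
  unfolding param_val_def by (rule DERIV_cdivide[OF DERIV_form_val_m])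

lemma DERIV_param_val_v:
  assumes "0 < v"
  shows "((\<lambda>t. param_val d X x \<theta> t m) has_real_derivative param_val (d + 2) (Lv d X) x \<theta> v m) (at v)"
proof -
  obtain s where s: "0 < s" "v = s\<^sup>2"
    using assms by (metis real_sqrt_gt_0_iff real_sqrt_pow2 less_imp_le)
  have "((\<lambda>t. form_val X ((x - \<theta>) / sqrt t) m / sqrt t ^ Suc d) has_real_derivative
      - (form_val (Lz X) ((x - \<theta>) / s) m * ((x - \<theta>) / s) + (real d + 1) * form_val X ((x - \<theta>) / s) m)
      / (2 * s ^ Suc (d + 2))) (at (s\<^sup>2))"
    using s(1)
    by (auto intro!: derivative_eq_intros simp del: power_Suc) (simp add: field_simps power_Suc)
  then show ?thesis
    unfolding param_val_def form_val_Lv s(2)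
    by (rule DERIV_cong) (use s(1) in \<open>simp add: field_simps\<close>)
qed

lemma param_val_scale_form_const: "param_val d (scale_form [:p:] X) x \<theta> v m = poly p m * param_val d X x \<theta> v m"
  by (simp add: param_val_def)

lemma param_val_sum: "param_val d (sum f S) x \<theta> v m = (\<Sum>i\<in>S. param_val d (f i) x \<theta> v m)"
  by (simp add: param_val_def form_val_sum sum_divide_distrib)

lemma param_val_shift:
  "0 < v \<Longrightarrow> param_val (d + 2 * k) X x \<theta> v m = param_val d X x \<theta> v m / v ^ k"
  by (simp add: param_val_def power_add power_mult)

definition represents :: "nat \<Rightarrow> form \<Rightarrow> (real \<Rightarrow> real \<Rightarrow> real \<Rightarrow> real \<Rightarrow> real) \<Rightarrow> bool" where
  "represents d X g \<longleftrightarrow> (\<forall>x \<theta> v m. 0 < v \<longrightarrow> g x \<theta> v m = param_val d X x \<theta> v m)"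

lemma represents_d_theta: "represents d X g \<Longrightarrow> represents (Suc d) (Ltheta X) (d_theta g)"
  unfolding represents_def d_theta_def using DERIV_imp_deriv[OF DERIV_param_val_theta] by simp

lemma represents_d_m: "represents d X g \<Longrightarrow> represents d (Lm X) (d_m g)"
  unfolding represents_def d_m_def
proof (intro allI impI)
  fix x \<theta> v m :: real
  assume "\<forall>x \<theta> v m. 0 < v \<longrightarrow> g x \<theta> v m = param_val d X x \<theta> v m" and "0 < v"
  then have "g x \<theta> v = param_val d X x \<theta> v"
    by auto
  then show "deriv (\<lambda>t. g x \<theta> v t) m = param_val d (Lm X) x \<theta> v m"
    using DERIV_imp_deriv[OF DERIV_param_val_m] by simp
qed

lemma represents_d_v: "represents d X g \<Longrightarrow> represents (d + 2) (Lv d X) (d_v g)"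
  unfolding represents_def
proof (intro allI impI)
  fix x \<theta> v m :: real
  assume g: "\<forall>x \<theta> v m. 0 < v \<longrightarrow> g x \<theta> v m = param_val d X x \<theta> v m" and v: "0 < v"
  have "((\<lambda>t. g x \<theta> t m) has_real_derivative param_val (d + 2) (Lv d X) x \<theta> v m) (at v)"
    by (rule has_field_derivative_transform_within_open[OF DERIV_param_val_v[OF v], of "{0<..}"])
      (use v g in auto)
  then show "d_v g x \<theta> v m = param_val (d + 2) (Lv d X) x \<theta> v m"
    unfolding d_v_def by (rule DERIV_imp_deriv)
qed

definition skew_form :: form where
  "skew_form = (const_bp (2 * c_phi), 0)"

lemma represents_skewnorm: "represents 0 skew_form skewnorm"
  by (simp add: represents_def skewnorm_def param_val_def form_val_def skew_form_def
      std_normal_density_def c_phi_def)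

primrec Lv_iter :: "nat \<Rightarrow> form \<Rightarrow> form" where
  "Lv_iter 0 X = X"
| "Lv_iter (Suc q) X = Lv (2 * q) (Lv_iter q X)"

definition deriv_rep :: "nat \<times> nat \<times> nat \<Rightarrow> form" where
  "deriv_rep \<alpha> = (case \<alpha> of (a1, a2, a3) \<Rightarrow> (Ltheta ^^ a1) (Lv_iter a2 ((Lm ^^ a3) skew_form)))"

definition hdeg :: "nat \<times> nat \<times> nat \<Rightarrow> nat" where
  "hdeg \<alpha> = (case \<alpha> of (a1, a2, a3) \<Rightarrow> a1 + 2 * a2)"

lemma deriv_rep_simp: "deriv_rep (a1, a2, a3) = (Ltheta ^^ a1) (Lv_iter a2 ((Lm ^^ a3) skew_form))"
  by (simp add: deriv_rep_def)

lemma hdeg_simp [simp]: "hdeg (a1, a2, a3) = a1 + 2 * a2"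
  by (simp add: hdeg_def)

lemma represents_Dskew: "represents (hdeg \<alpha>) (deriv_rep \<alpha>) (Dskew \<alpha>)"
proof (cases \<alpha>)
  case (fields a1 a2 a3)
  have "represents 0 ((Lm ^^ a3) skew_form) ((d_m ^^ a3) skewnorm)"
    by (induction a3) (simp_all add: represents_skewnorm represents_d_m)
  then have "represents (2 * a2) (Lv_iter a2 ((Lm ^^ a3) skew_form)) ((d_v ^^ a2) ((d_m ^^ a3) skewnorm))"
  proof (induction a2)
    case (Suc a2)
    from represents_d_v[OF Suc.IH[OF Suc.prems]] show ?case
      by simp
  qed simp
  then show ?thesis
    unfolding fields Dskew_def deriv_rep_simp hdeg_simp
    by (induction a1) (simp_all add: represents_d_theta)
qed

lemma deriv_rep_Ltheta: "Ltheta (deriv_rep (a1, a2, a3)) = deriv_rep (Suc a1, a2, a3)"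
  by (simp add: deriv_rep_simp)

lemma deriv_rep_Lv: "Lv (a1 + 2 * a2) (deriv_rep (a1, a2, a3)) = deriv_rep (a1, Suc a2, a3)"
proof -
  have "(Ltheta ^^ p) (Lv d X) = Lv (p + d) ((Ltheta ^^ p) X)" for p d X
    by (induction p) (simp_all add: Ltheta_Lv_commute)
  then show ?thesis by (simp add: deriv_rep_simp)
qed

lemma deriv_rep_Lm: "Lm (deriv_rep (a1, a2, a3)) = deriv_rep (a1, a2, Suc a3)"
proof -
  have "Lm (Lv_iter q X) = Lv_iter q (Lm X)" for q X
    by (induction q) (simp_all add: Lm_Lv_commute)
  moreover have "Lm ((Ltheta ^^ p) X) = (Ltheta ^^ p) (Lm X)" for p X
    by (induction p) (simp_all add: Lm_Ltheta_commute)
  ultimately show ?thesis by (simp add: deriv_rep_simp)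
qed

lemma deriv_rep_theta2:
  "deriv_rep (2, 0, 0)
     = scale_form [:[:2:]:] (deriv_rep (0, 1, 0)) - scale_form [:[:0, 1, 0, 1:]:] (deriv_rep (0, 0, 1))"
proof -
  have "Ltheta (Ltheta skew_form)
      = scale_form 2 (Lv 0 skew_form) - scale_form (var_m * (1 + var_m\<^sup>2)) (Lm skew_form)"
    using const_bp_half_times_2
    by (simp add: skew_form_def Ltheta_def Lv_def Lm_def scale_form_def Lz_def pderiv_simps, algebra)
  moreover have "(2 :: bipoly) = [:[:2:]:]" "var_m * (1 + var_m\<^sup>2) = [:[:0, 1, 0, 1:]:]"
    by (simp_all add: var_m_def numeral_poly power2_eq_square one_pCons)
  ultimately show ?thesis
    by (simp add: deriv_rep_simp numeral_2_eq_2)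
qed

lemma deriv_rep_v_m:
  "scale_form [:[:0, 2:]:] (deriv_rep (0, 1, 1))
     = scale_form [:[:0, -2:]:] (deriv_rep (0, 0, 1)) + scale_form [:[:-1, 0, -1:]:] (deriv_rep (0, 0, 2))"
proof -
  have "scale_form (2 * var_m) (Lv 0 (Lm skew_form))
      = scale_form (- 2 * var_m) (Lm skew_form) + scale_form (- (1 + var_m\<^sup>2)) (Lm (Lm skew_form))"
    using const_bp_half_times_2
    by (simp add: skew_form_def Lv_def Lm_def scale_form_def Lz_def pderiv_simps, algebra)
  moreover have "2 * var_m = [:[:0, 2:]:]" "- 2 * var_m = [:[:0, -2:]:]"
      "- (1 + var_m\<^sup>2) = [:[:-1, 0, -1:]:]"
    by (simp_all add: var_m_def numeral_poly power2_eq_square one_pCons)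
  ultimately show ?thesis
    by (simp add: deriv_rep_simp numeral_2_eq_2)
qed

section \<open>Spans with coefficients rational in m\<close>

lemma Kset_iff [simp]: "(k1, k2, k3) \<in> Kset (a1, a2, a3) \<longleftrightarrow>
   k1 \<le> 1 \<and> (k3 = 0 \<or> (k2 = 0 \<and> 1 \<le> k3)) \<and> k1 + k2 + k3 \<le> a1 + a2 + a3 \<and>
   k1 + 2 * k2 + 2 * k3 \<le> a1 + 2 * a2 + 2 * a3"
  by (auto simp: Kset_def F_set_def A1_def A2_def abs3_def wt_def)

lemma finite_Kset [simp]: "finite (Kset \<alpha>)"
proof -
  have "Kset \<alpha> \<subseteq> {..abs3 \<alpha>} \<times> {..abs3 \<alpha>} \<times> {..abs3 \<alpha>}"
    by (auto simp: Kset_def F_set_def A1_def A2_def abs3_def split: prod.splits)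
  then show ?thesis by (rule finite_subset) auto
qed

lemma Kset_mono:
  "a1 + a2 + a3 \<le> b1 + b2 + b3 \<Longrightarrow> a1 + 2 * a2 + 2 * a3 \<le> b1 + 2 * b2 + 2 * b3 \<Longrightarrow>
   Kset (a1, a2, a3) \<subseteq> Kset (b1, b2, b3)"
  by force

definition fits :: "nat \<Rightarrow> nat \<times> nat \<times> nat \<Rightarrow> bool" where
  "fits d \<kappa> \<longleftrightarrow> hdeg \<kappa> \<le> d \<and> even (d - hdeg \<kappa>)"

text \<open>
  X equals the combination of the deriv_rep \<kappa>, \<kappa> \<in> K, with coefficients P \<kappa> / H, where H has no
  nonzero real root; fits d \<kappa> makes param_val d (deriv_rep \<kappa>) equal to Dskew \<kappa> divided by a power
  of v (param_val_shift).\<close>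

definition rspan :: "nat \<Rightarrow> (nat \<times> nat \<times> nat) set \<Rightarrow> form \<Rightarrow> bool" where
  "rspan d K X \<longleftrightarrow> (\<exists>H P. (\<forall>m::real. m \<noteq> 0 \<longrightarrow> poly H m \<noteq> 0) \<and>
     (\<forall>\<kappa>\<in>K. P \<kappa> \<noteq> 0 \<longrightarrow> fits d \<kappa>) \<and>
     scale_form [:H:] X = (\<Sum>\<kappa>\<in>K. scale_form [:P \<kappa>:] (deriv_rep \<kappa>)))"

lemma scale_form_const_const: "scale_form [:a:] (scale_form [:b:] X) = scale_form [:a * b:] X"
  by (simp add: scale_form_scale_form mult.commute[of b a])

lemma rspanE:
  assumes "rspan d K X"
  obtains H P where "\<forall>m::real. m \<noteq> 0 \<longrightarrow> poly H m \<noteq> 0"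
    "\<forall>\<kappa>\<in>K. P \<kappa> \<noteq> 0 \<longrightarrow> fits d \<kappa>"
    "scale_form [:H:] X = (\<Sum>\<kappa>\<in>K. scale_form [:P \<kappa>:] (deriv_rep \<kappa>))"
  using assms unfolding rspan_def by blast

lemma rspan_zero: "rspan d K 0"
  unfolding rspan_def by (rule exI[of _ 1], rule exI[of _ "\<lambda>_. 0"]) simp

lemma rspan_add:
  assumes "rspan d K X" "rspan d K Y"
  shows "rspan d K (X + Y)"
proof -
  obtain H1 P1 where HX: "\<forall>m::real. m \<noteq> 0 \<longrightarrow> poly H1 m \<noteq> 0"
    "\<forall>\<kappa>\<in>K. P1 \<kappa> \<noteq> 0 \<longrightarrow> fits d \<kappa>"
    "scale_form [:H1:] X = (\<Sum>\<kappa>\<in>K. scale_form [:P1 \<kappa>:] (deriv_rep \<kappa>))"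
    using assms(1) by (rule rspanE)
  obtain H2 P2 where HY: "\<forall>m::real. m \<noteq> 0 \<longrightarrow> poly H2 m \<noteq> 0"
    "\<forall>\<kappa>\<in>K. P2 \<kappa> \<noteq> 0 \<longrightarrow> fits d \<kappa>"
    "scale_form [:H2:] Y = (\<Sum>\<kappa>\<in>K. scale_form [:P2 \<kappa>:] (deriv_rep \<kappa>))"
    using assms(2) by (rule rspanE)
  have "scale_form [:H1 * H2:] (X + Y) = scale_form [:H2:] (scale_form [:H1:] X) + scale_form [:H1:] (scale_form [:H2:] Y)"
    by (simp only: scale_form_const_const scale_form_add mult.commute)
  also have "\<dots> = (\<Sum>\<kappa>\<in>K. scale_form [:H2 * P1 \<kappa> + H1 * P2 \<kappa>:] (deriv_rep \<kappa>))"
    by (simp only: HX(3) HY(3) scale_form_sum sum.distrib[symmetric] scale_form_const_const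
        scale_form_left_add[symmetric] add_pCons add_0)
  finally show ?thesis
    unfolding rspan_def using HX(1,2) HY(1,2)
    by (intro exI[of _ "H1 * H2"] exI[of _ "\<lambda>\<kappa>. H2 * P1 \<kappa> + H1 * P2 \<kappa>"]) auto
qed

lemma rspan_scale_form_const:
  assumes "rspan d K X"
  shows "rspan d K (scale_form [:p:] X)"
proof -
  obtain H P where HX: "\<forall>m::real. m \<noteq> 0 \<longrightarrow> poly H m \<noteq> 0"
    "\<forall>\<kappa>\<in>K. P \<kappa> \<noteq> 0 \<longrightarrow> fits d \<kappa>"
    "scale_form [:H:] X = (\<Sum>\<kappa>\<in>K. scale_form [:P \<kappa>:] (deriv_rep \<kappa>))"
    using assms by (rule rspanE)
  have "scale_form [:H:] (scale_form [:p:] X) = scale_form [:p:] (scale_form [:H:] X)"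
    by (simp only: scale_form_const_const mult.commute)
  also have "\<dots> = (\<Sum>\<kappa>\<in>K. scale_form [:p * P \<kappa>:] (deriv_rep \<kappa>))"
    by (simp only: HX(3) scale_form_sum scale_form_const_const)
  finally show ?thesis
    unfolding rspan_def using HX(1,2) by (intro exI[of _ H] exI[of _ "\<lambda>\<kappa>. p * P \<kappa>"]) auto
qed

lemma rspan_cancel:
  assumes "rspan d K (scale_form [:h:] X)" "\<forall>m::real. m \<noteq> 0 \<longrightarrow> poly h m \<noteq> 0"
  shows "rspan d K X"
proof -
  obtain H P where HX: "\<forall>m::real. m \<noteq> 0 \<longrightarrow> poly H m \<noteq> 0"
    "\<forall>\<kappa>\<in>K. P \<kappa> \<noteq> 0 \<longrightarrow> fits d \<kappa>"
    "scale_form [:H:] (scale_form [:h:] X) = (\<Sum>\<kappa>\<in>K. scale_form [:P \<kappa>:] (deriv_rep \<kappa>))"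
    using assms(1) by (rule rspanE)
  then show ?thesis
    unfolding rspan_def scale_form_const_const using assms(2)
    by (intro exI[of _ "H * h"] exI[of _ P]) auto
qed

lemma rspan_sum: "finite S \<Longrightarrow> (\<And>i. i \<in> S \<Longrightarrow> rspan d K (f i)) \<Longrightarrow> rspan d K (\<Sum>i\<in>S. f i)"
  by (induction S rule: finite_induct) (auto intro: rspan_zero rspan_add)

lemma rspan_diff:
  assumes "rspan d K X" "rspan d K Y"
  shows "rspan d K (X - Y)"
proof -
  have "rspan d K (scale_form [:-1:] Y)"
    using assms(2) by (rule rspan_scale_form_const)
  moreover have "scale_form [:-1:] Y = - Y"
    by (simp add: scale_form_def prod_eq_iff)
  ultimately show ?thesis
    using rspan_add[OF assms(1), of "- Y"] by simp
qed

lemma rspan_deriv_rep: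
  assumes "\<kappa> \<in> K" "finite K" "fits d \<kappa>"
  shows "rspan d K (deriv_rep \<kappa>)"
proof -
  have "(\<Sum>\<iota>\<in>K. scale_form [:if \<iota> = \<kappa> then 1 else 0:] (deriv_rep \<iota>)) = deriv_rep \<kappa>"
    using assms(1,2) by (simp add: if_distrib[of "\<lambda>c. scale_form [:c:] _"] one_pCons[symmetric] cong: if_cong)
  then show ?thesis
    unfolding rspan_def using assms(3)
    by (intro exI[of _ 1] exI[of _ "\<lambda>\<iota>. if \<iota> = \<kappa> then 1 else 0"]) (auto simp: one_pCons[symmetric])
qed

lemma rspan_mono:
  assumes "rspan d K X" "K \<subseteq> K'" "finite K'" "d \<le> d'" "even (d' - d)"
  shows "rspan d' K' X"
proof -
  obtain H P where HX: "\<forall>m::real. m \<noteq> 0 \<longrightarrow> poly H m \<noteq> 0"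
    "\<forall>\<kappa>\<in>K. P \<kappa> \<noteq> 0 \<longrightarrow> fits d \<kappa>"
    "scale_form [:H:] X = (\<Sum>\<kappa>\<in>K. scale_form [:P \<kappa>:] (deriv_rep \<kappa>))"
    using assms(1) by (rule rspanE)
  define P' where "P' \<kappa> = (if \<kappa> \<in> K then P \<kappa> else 0)" for \<kappa>
  have "(\<Sum>\<kappa>\<in>K'. scale_form [:P' \<kappa>:] (deriv_rep \<kappa>)) = (\<Sum>\<kappa>\<in>K. scale_form [:P \<kappa>:] (deriv_rep \<kappa>))"
    using assms(2,3) by (intro sum.mono_neutral_cong_right) (auto simp: P'_def)
  moreover have "P' \<kappa> \<noteq> 0 \<longrightarrow> fits d' \<kappa>" if "\<kappa> \<in> K'" for \<kappa>
    using HX(2) assms(4,5) by (auto simp: P'_def fits_def)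
  ultimately show ?thesis
    unfolding rspan_def using HX(1,3) by (intro exI[of _ H] exI[of _ P']) auto
qed

lemma rspan_image:
  assumes X: "rspan d K X" and "finite K"
    and add: "\<And>X Y. L (X + Y) = L X + L Y" and zero: "L 0 = 0"
    and scale: "\<And>p X. L (scale_form [:p:] X) = scale_form [:p:] (L X)"
    and rep: "\<And>\<kappa>. \<kappa> \<in> K \<Longrightarrow> fits d \<kappa> \<Longrightarrow> rspan d' K' (L (deriv_rep \<kappa>))"
  shows "rspan d' K' (L X)"
proof -
  obtain H P where HX: "\<forall>m::real. m \<noteq> 0 \<longrightarrow> poly H m \<noteq> 0"
    "\<forall>\<kappa>\<in>K. P \<kappa> \<noteq> 0 \<longrightarrow> fits d \<kappa>"
    "scale_form [:H:] X = (\<Sum>\<kappa>\<in>K. scale_form [:P \<kappa>:] (deriv_rep \<kappa>))"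
    using X by (rule rspanE)
  have "scale_form [:H:] (L X) = (\<Sum>\<kappa>\<in>K. scale_form [:P \<kappa>:] (L (deriv_rep \<kappa>)))"
    using sum_comp_morphism[of L, OF zero add, symmetric] by (simp add: scale[symmetric] HX(3) o_def)
  moreover have "rspan d' K' (scale_form [:P \<kappa>:] (L (deriv_rep \<kappa>)))" if "\<kappa> \<in> K" for \<kappa>
    using that HX(2) rep rspan_scale_form_const rspan_zero by (cases "P \<kappa> = 0") auto
  ultimately have "rspan d' K' (scale_form [:H:] (L X))"
    using \<open>finite K\<close> by (simp add: rspan_sum)
  then show ?thesis
    using HX(1) by (rule rspan_cancel)
qed

lemma rspan_Lm:
  assumes X: "rspan d K X" and "finite K" "K \<subseteq> K'" "finite K'"
    and rep: "\<And>\<kappa>. \<kappa> \<in> K \<Longrightarrow> fits d \<kappa> \<Longrightarrow> rspan d K' (Lm (deriv_rep \<kappa>))"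
  shows "rspan d K' (Lm X)"
proof -
  obtain H P where HX: "\<forall>m::real. m \<noteq> 0 \<longrightarrow> poly H m \<noteq> 0"
    "\<forall>\<kappa>\<in>K. P \<kappa> \<noteq> 0 \<longrightarrow> fits d \<kappa>"
    "scale_form [:H:] X = (\<Sum>\<kappa>\<in>K. scale_form [:P \<kappa>:] (deriv_rep \<kappa>))"
    using X by (rule rspanE)
  \<comment> \<open>Lm is a derivation in m, so H^2 Lm X = H Lm (H X) - H' (H X).\<close>
  have "scale_form [:H:] (scale_form [:H:] (Lm X))
      = scale_form [:H:] (Lm (scale_form [:H:] X)) - scale_form [:pderiv H:] (scale_form [:H:] X)"
    by (simp add: Lm_scale_form_const scale_form_add scale_form_const_const mult.commute)
  also have "\<dots> = scale_form [:H:] (\<Sum>\<kappa>\<in>K. scale_form [:pderiv (P \<kappa>):] (deriv_rep \<kappa>)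
        + scale_form [:P \<kappa>:] (Lm (deriv_rep \<kappa>)))
      - scale_form [:pderiv H:] (\<Sum>\<kappa>\<in>K. scale_form [:P \<kappa>:] (deriv_rep \<kappa>))"
    by (simp only: HX(3) Lm_sum Lm_scale_form_const)
  finally have eq: "scale_form [:H:] (scale_form [:H:] (Lm X)) = \<dots>" .
  have "rspan d K' (scale_form [:pderiv (P \<kappa>):] (deriv_rep \<kappa>) + scale_form [:P \<kappa>:] (Lm (deriv_rep \<kappa>)))
      \<and> rspan d K' (scale_form [:P \<kappa>:] (deriv_rep \<kappa>))"  if "\<kappa> \<in> K" for \<kappa>
  proof (cases "P \<kappa> = 0")
    case False
    then have "fits d \<kappa>"
      using that HX(2) by blast
    moreover have "rspan d K' (deriv_rep \<kappa>)"
      using that assms(3,4) calculation by (intro rspan_deriv_rep) auto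
    ultimately show ?thesis
      using rep[OF that] by (intro conjI rspan_add rspan_scale_form_const)
  qed (simp add: rspan_zero)
  then have "rspan d K' (\<Sum>\<kappa>\<in>K. scale_form [:pderiv (P \<kappa>):] (deriv_rep \<kappa>)
        + scale_form [:P \<kappa>:] (Lm (deriv_rep \<kappa>)))"
      "rspan d K' (\<Sum>\<kappa>\<in>K. scale_form [:P \<kappa>:] (deriv_rep \<kappa>))"
    by (intro rspan_sum[OF \<open>finite K\<close>]; blast)+
  then have "rspan d K' (scale_form [:H:] (scale_form [:H:] (Lm X)))"
    unfolding eq by (intro rspan_diff rspan_scale_form_const)
  then have "rspan d K' (scale_form [:H:] (Lm X))"
    using HX(1) by (rule rspan_cancel)
  then show ?thesis
    using HX(1) by (rule rspan_cancel)
qed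

section \<open>Reduction to the index set\<close>

definition m_axis :: "(nat \<times> nat \<times> nat) set" where
  "m_axis = range (\<lambda>j. (0, 0, j))"

lemma rspan_Lm_m_axis:
  assumes "rspan d (Kset (a1, a2, a3) \<inter> m_axis) X"
  shows "rspan d (Kset (a1, a2, Suc a3) \<inter> m_axis) (Lm X)"
proof (rule rspan_Lm[OF assms])
  fix \<kappa> assume \<kappa>: "\<kappa> \<in> Kset (a1, a2, a3) \<inter> m_axis" and "fits d \<kappa>"
  then obtain j where j: "\<kappa> = (0, 0, j)"
    by (auto simp: m_axis_def)
  have "fits d (0, 0, Suc j)"
    using \<open>fits d \<kappa>\<close> by (simp add: j fits_def)
  then show "rspan d (Kset (a1, a2, Suc a3) \<inter> m_axis) (Lm (deriv_rep \<kappa>))"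
    using \<kappa> unfolding j deriv_rep_Lm by (intro rspan_deriv_rep) (auto simp: m_axis_def)
qed (auto simp: m_axis_def)

lemma rspan_v_m:
  assumes "1 \<le> k"
  shows "rspan 2 (Kset (0, 1, k) \<inter> m_axis) (deriv_rep (0, 1, k))"
  using assms
proof (induction k rule: dec_induct)
  case base
  have "rspan 2 (Kset (0, 1, 1) \<inter> m_axis) (scale_form [:[:0, 2:]:] (deriv_rep (0, 1, 1)))"
    unfolding deriv_rep_v_m
    by (intro rspan_add rspan_scale_form_const rspan_deriv_rep) (auto simp: m_axis_def fits_def)
  then show ?case
    by (rule rspan_cancel) simp
next
  case (step n)
  show ?case
    using rspan_Lm_m_axis[OF step.IH] by (simp add: deriv_rep_Lm)
qed

lemma rspan_Lv:
  assumes X: "rspan (a1 + 2 * a2) (Kset (a1, a2, a3)) X" and "even a1"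
  shows "rspan (a1 + 2 * a2 + 2) (Kset (a1, Suc a2, a3)) (Lv (a1 + 2 * a2) X)"
proof (rule rspan_image[OF X, where L = "Lv (a1 + 2 * a2)"])
  let ?d = "a1 + 2 * a2" and ?K' = "Kset (a1, Suc a2, a3)"
  fix \<kappa> assume \<kappa>: "\<kappa> \<in> Kset (a1, a2, a3)" and "fits ?d \<kappa>"
  obtain k2 k3 where \<kappa>_eq: "\<kappa> = (0, k2, k3)" and le: "2 * k2 \<le> ?d"
    using \<kappa> \<open>fits ?d \<kappa>\<close> \<open>even a1\<close> by (cases \<kappa>) (auto simp: fits_def)
  have "Kset (a1, a2, a3) \<subseteq> ?K'"
    by (rule Kset_mono) simp_all
  then have rep: "rspan (?d + 2) ?K' (deriv_rep \<kappa>)"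
    using \<kappa> \<open>fits ?d \<kappa>\<close> by (intro rspan_deriv_rep) (auto simp: fits_def)
  have step: "rspan (?d + 2) ?K' (deriv_rep (0, Suc k2, k3))"
  proof (cases "k3 = 0")
    case True
    then show ?thesis
      using \<kappa> \<open>fits ?d \<kappa>\<close> by (intro rspan_deriv_rep) (auto simp: \<kappa>_eq fits_def)
  next
    case False
    then have "k2 = 0" "1 \<le> k3"
      using \<kappa> by (auto simp: \<kappa>_eq)
    moreover have "Kset (0, 1, k3) \<inter> m_axis \<subseteq> ?K'"
      using \<kappa> \<open>k2 = 0\<close> by (intro subset_trans[OF Int_lower1 Kset_mono]) (auto simp: \<kappa>_eq)
    ultimately show ?thesis
      using \<open>even a1\<close> rspan_mono[OF rspan_v_m[OF \<open>1 \<le> k3\<close>]] by simp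
  qed
  have "Lv ?d (deriv_rep \<kappa>) = Lv (2 * k2 + (?d - 2 * k2)) (deriv_rep \<kappa>)"
    using le by simp
  also have "\<dots> = deriv_rep (0, Suc k2, k3) + scale_form [:[:- real (?d - 2 * k2) / 2:]:] (deriv_rep \<kappa>)"
    unfolding Lv_shift using deriv_rep_Lv[of 0 k2 k3] by (simp add: \<kappa>_eq const_bp_def)
  finally show "rspan (?d + 2) ?K' (Lv ?d (deriv_rep \<kappa>))"
    using rep step by (simp add: rspan_add rspan_scale_form_const)
qed (simp_all add: Lv_add Lv_scale_form pderiv_pCons)

lemma rspan_deriv_rep_along_v:
  assumes "rspan a1 (Kset (a1, 0, a3)) (deriv_rep (a1, 0, a3))" and "even a1"
  shows "rspan (a1 + 2 * a2) (Kset (a1, a2, a3)) (deriv_rep (a1, a2, a3))"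
proof (induction a2)
  case (Suc a2)
  from rspan_Lv[OF this \<open>even a1\<close>] show ?case
    by (simp add: deriv_rep_Lv)
qed (simp add: assms(1))

lemma rspan_theta2_v: "rspan (2 + 2 * q) (Kset (2, q, 0)) (deriv_rep (2, q, 0))"
proof (rule rspan_deriv_rep_along_v)
  show "rspan 2 (Kset (2, 0, 0)) (deriv_rep (2, 0, 0))"
    unfolding deriv_rep_theta2 by (intro rspan_diff rspan_scale_form_const rspan_deriv_rep) (auto simp: fits_def)
qed simp

lemma rspan_theta2_m:
  assumes "1 \<le> k"
  shows "rspan 2 (Kset (2, 0, k)) (deriv_rep (2, 0, k))"
proof -
  have "deriv_rep (2, 0, 1) = Lm (deriv_rep (2, 0, 0))"
    by (simp add: deriv_rep_Lm)
  also have "\<dots> = scale_form [:[:2:]:] (deriv_rep (0, 1, 1))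
      - (scale_form [:[:1, 0, 3:]:] (deriv_rep (0, 0, 1)) + scale_form [:[:0, 1, 0, 1:]:] (deriv_rep (0, 0, 2)))"
    unfolding deriv_rep_theta2 Lm_diff Lm_scale_form deriv_rep_Lm by (simp add: pderiv_pCons numeral_2_eq_2)
  finally have eq: "deriv_rep (2, 0, 1) = \<dots>" .
  have v_m: "rspan 2 (Kset (2, 0, 1) \<inter> m_axis) (deriv_rep (0, 1, 1))"
    by (rule rspan_mono[OF rspan_v_m]) (auto simp: m_axis_def)
  have k1: "rspan 2 (Kset (2, 0, 1) \<inter> m_axis) (deriv_rep (2, 0, 1))"
    unfolding eq by (intro rspan_diff rspan_add rspan_scale_form_const v_m rspan_deriv_rep) (auto simp: m_axis_def fits_def)
  have "rspan 2 (Kset (2, 0, k) \<inter> m_axis) (deriv_rep (2, 0, k))"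
    using assms
  proof (induction k rule: dec_induct)
    case base
    show ?case by (rule k1)
  next
    case (step n)
    from rspan_Lm_m_axis[OF step.IH] show ?case
      by (simp add: deriv_rep_Lm)
  qed
  then show ?thesis
    by (rule rspan_mono) auto
qed

lemma rspan_theta2:
  assumes "k2 = 0 \<or> k3 = 0"
  shows "rspan (2 + 2 * k2) (Kset (2, k2, k3)) (deriv_rep (2, k2, k3))"
  using assms rspan_theta2_v[of k2] rspan_theta2_m[of k3] by (cases "k3 = 0") auto

lemma rspan_Ltheta:
  assumes X: "rspan (a1 + 2 * a2) (Kset (a1, a2, a3)) X"
  shows "rspan (a1 + 2 * a2 + 1) (Kset (Suc a1, a2, a3)) (Ltheta X)"
proof (rule rspan_image[OF X, where L = Ltheta])
  let ?d = "a1 + 2 * a2" and ?K' = "Kset (Suc a1, a2, a3)"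
  fix \<kappa> assume \<kappa>: "\<kappa> \<in> Kset (a1, a2, a3)" and "fits ?d \<kappa>"
  obtain k1 k2 k3 where \<kappa>_eq: "\<kappa> = (k1, k2, k3)"
    by (cases \<kappa>)
  have "rspan (?d + 1) ?K' (deriv_rep (Suc k1, k2, k3))"
  proof (cases "k1 = 0")
    case True
    then show ?thesis
      using \<kappa> \<open>fits ?d \<kappa>\<close> by (intro rspan_deriv_rep) (auto simp: \<kappa>_eq fits_def)
  next
    case False
    then have "k1 = 1" "k2 = 0 \<or> k3 = 0"
      using \<kappa> by (auto simp: \<kappa>_eq)
    have "Kset (2, k2, k3) \<subseteq> ?K'"
      using \<kappa> \<open>k1 = 1\<close> by (intro Kset_mono) (auto simp: \<kappa>_eq)
    then have "rspan (?d + 1) ?K' (deriv_rep (2, k2, k3))"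
      using \<open>fits ?d \<kappa>\<close> \<open>k1 = 1\<close>
      by (intro rspan_mono[OF rspan_theta2[OF \<open>k2 = 0 \<or> k3 = 0\<close>]]) (auto simp: \<kappa>_eq fits_def)
    then show ?thesis
      using \<open>k1 = 1\<close> by (simp add: numeral_2_eq_2)
  qed
  then show "rspan (?d + 1) ?K' (Ltheta (deriv_rep \<kappa>))"
    by (simp add: \<kappa>_eq deriv_rep_Ltheta)
qed (simp_all add: Ltheta_add Ltheta_scale_form pderiv_pCons)

lemma rspan_deriv_rep_Kset: "rspan (hdeg \<alpha>) (Kset \<alpha>) (deriv_rep \<alpha>)"
proof (cases \<alpha>)
  case (fields a1 a2 a3)
  have "rspan (a1 + 2 * a2) (Kset (a1, a2, a3)) (deriv_rep (a1, a2, a3))"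
  proof (induction a1)
    case 0
    have "rspan 0 (Kset (0, 0, a3)) (deriv_rep (0, 0, a3))"
      by (rule rspan_deriv_rep) (auto simp: fits_def)
    from rspan_deriv_rep_along_v[OF this] show ?case
      by simp
  next
    case (Suc a1)
    from rspan_Ltheta[OF this] show ?case
      by (simp add: deriv_rep_Ltheta)
  qed
  then show ?thesis
    by (simp add: fields)
qed

lemma Dskew_expansion:
  obtains H P where "\<forall>m::real. m \<noteq> 0 \<longrightarrow> poly H m \<noteq> 0"
    and "\<And>x \<theta> v m. 0 < v \<Longrightarrow> poly H m * Dskew \<alpha> x \<theta> v m
           = (\<Sum>\<kappa>\<in>Kset \<alpha>. poly (P \<kappa>) m * Dskew \<kappa> x \<theta> v m / v ^ ((hdeg \<alpha> - hdeg \<kappa>) div 2))"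
proof -
  obtain H P where H: "\<forall>m::real. m \<noteq> 0 \<longrightarrow> poly H m \<noteq> 0"
    and P: "\<forall>\<kappa>\<in>Kset \<alpha>. P \<kappa> \<noteq> 0 \<longrightarrow> fits (hdeg \<alpha>) \<kappa>"
    and comb: "scale_form [:H:] (deriv_rep \<alpha>) = (\<Sum>\<kappa>\<in>Kset \<alpha>. scale_form [:P \<kappa>:] (deriv_rep \<kappa>))"
    using rspan_deriv_rep_Kset by (rule rspanE)
  have "poly H m * Dskew \<alpha> x \<theta> v m
      = (\<Sum>\<kappa>\<in>Kset \<alpha>. poly (P \<kappa>) m * Dskew \<kappa> x \<theta> v m / v ^ ((hdeg \<alpha> - hdeg \<kappa>) div 2))"
    if "0 < v" for x \<theta> v m
  proof -
    have Dskew_eq: "Dskew \<kappa> x \<theta> v m = param_val (hdeg \<kappa>) (deriv_rep \<kappa>) x \<theta> v m" for \<kappa>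
      using represents_Dskew[of \<kappa>] that by (simp add: represents_def)
    have "poly H m * Dskew \<alpha> x \<theta> v m
        = (\<Sum>\<kappa>\<in>Kset \<alpha>. poly (P \<kappa>) m * param_val (hdeg \<alpha>) (deriv_rep \<kappa>) x \<theta> v m)"
      by (simp add: Dskew_eq comb param_val_sum param_val_scale_form_const flip: param_val_scale_form_const)
    also have "\<dots> = (\<Sum>\<kappa>\<in>Kset \<alpha>. poly (P \<kappa>) m * Dskew \<kappa> x \<theta> v m / v ^ ((hdeg \<alpha> - hdeg \<kappa>) div 2))"
    proof (rule sum.cong[OF refl])
      fix \<kappa> assume "\<kappa> \<in> Kset \<alpha>"
      show "poly (P \<kappa>) m * param_val (hdeg \<alpha>) (deriv_rep \<kappa>) x \<theta> v m
          = poly (P \<kappa>) m * Dskew \<kappa> x \<theta> v m / v ^ ((hdeg \<alpha> - hdeg \<kappa>) div 2)"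
      proof (cases "P \<kappa> = 0")
        case False
        then have "hdeg \<alpha> = hdeg \<kappa> + 2 * ((hdeg \<alpha> - hdeg \<kappa>) div 2)"
          using P \<open>\<kappa> \<in> Kset \<alpha>\<close> by (auto simp: fits_def)
        then show ?thesis
          using param_val_shift[OF that, of "hdeg \<kappa>"] by (metis Dskew_eq times_divide_eq_right)
      qed simp
    qed
    finally show ?thesis .
  qed
  with H show thesis
    by (rule that)
qed

theorem lemma4p2:
  fixes \<alpha> :: "nat \<times> nat \<times> nat"
  shows "\<exists>P H Q :: nat \<times> nat \<times> nat \<Rightarrow> real poly.
     (\<forall>\<kappa>\<in>Kset \<alpha>. \<forall>m::real. m \<noteq> 0 \<longrightarrow> poly (H \<kappa>) m \<noteq> 0) \<and>
     (\<forall>\<kappa>\<in>Kset \<alpha>. \<forall>v::real. v > 0 \<longrightarrow> poly (Q \<kappa>) v \<noteq> 0) \<and>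
     (\<forall>x \<theta> v m :: real. v > 0 \<longrightarrow> m \<noteq> 0 \<longrightarrow>
        Dskew \<alpha> x \<theta> v m =
        (\<Sum>\<kappa>\<in>Kset \<alpha>. poly (P \<kappa>) m / (poly (H \<kappa>) m * poly (Q \<kappa>) v) * Dskew \<kappa> x \<theta> v m))"
proof -
  obtain H P where H: "\<forall>m::real. m \<noteq> 0 \<longrightarrow> poly H m \<noteq> 0"
    and expansion: "\<And>x \<theta> v m. 0 < v \<Longrightarrow> poly H m * Dskew \<alpha> x \<theta> v m
           = (\<Sum>\<kappa>\<in>Kset \<alpha>. poly (P \<kappa>) m * Dskew \<kappa> x \<theta> v m / v ^ ((hdeg \<alpha> - hdeg \<kappa>) div 2))"
    using Dskew_expansion[of \<alpha>] by blast
  define Q where "Q \<kappa> = (monom 1 ((hdeg \<alpha> - hdeg \<kappa>) div 2) :: real poly)" for \<kappa>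
  have "Dskew \<alpha> x \<theta> v m = (\<Sum>\<kappa>\<in>Kset \<alpha>. poly (P \<kappa>) m / (poly H m * poly (Q \<kappa>) v) * Dskew \<kappa> x \<theta> v m)"
    if "0 < v" "m \<noteq> 0" for x \<theta> v m :: real
  proof -
    have "Dskew \<alpha> x \<theta> v m = poly H m * Dskew \<alpha> x \<theta> v m / poly H m"
      using H that(2) by simp
    then show ?thesis
      unfolding expansion[OF that(1)] by (simp add: sum_divide_distrib Q_def poly_monom mult.commute)
  qed
  then show ?thesis
    using H by (intro exI[of _ P] exI[of _ "\<lambda>_. H"] exI[of _ Q]) (auto simp: Q_def poly_monom)
qed

end
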